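(* Let $p\in(0,1/2)$ and $\beta<0$. Then there exist $q\in\big(\tfrac{p+1}{3},1\big)$ (any $q$ sufficiently close to $1$) and, for such $q$, a $\delta>0$, such that the map $T$ is a continuous and compact map from $\Gamma_{\beta,q,\delta}$ into $\Gamma_{\beta,q,\delta}$, with respect to the sup norm of $C([0,\delta])$.
   Context: Let $\alpha=\frac{2}{2-p}$ and $\gamma_\beta=\big[\frac{3}{|\beta|(p+1)}\big]^{1/3}$. For $q\in(\frac{p+1}{3},1)$ and $\delta>0$ let $$\Gamma_{\beta,q,\delta}=\Big\{\xi\in C([0,\delta]):\ \big|\xi(\varphi)-\gamma_\beta\varphi^{\frac{p+1}{3}}\big|\le\varphi^q\ \ \forall\varphi\in[0,\delta]\Big\}.$$ For $\xi\in\Gamma_{\beta,q,\delta}$, the function $\zeta=T\xi$ is defined on $[0,\delta]$ by $\zeta(0)=0$ and $$\zeta'(\varphi)=\frac{\alpha^2\xi(\varphi)+\varphi^p\xi(\varphi)^{-1}}{\alpha(\alpha-1)\varphi-\beta\,\xi(\varphi)},\qquad \varphi\in(0,\delta].$$ *)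

theory Defs
  imports "HOL-Analysis.Analysis"
begin

definition alpha :: "real \<Rightarrow> real" where
  "alpha p = 2 / (2 - p)"

definition gamma_b :: "real \<Rightarrow> real \<Rightarrow> real" where
  "gamma_b p \<beta> = (3 / (\<bar>\<beta>\<bar> * (p + 1))) powr (1/3)"

definition Gamma :: "real \<Rightarrow> real \<Rightarrow> real \<Rightarrow> real \<Rightarrow> (real \<Rightarrow> real) set" where
  "Gamma p \<beta> q \<delta> = {\<xi>. continuous_on {0..\<delta>} \<xi> \<and>
     (\<forall>\<phi>\<in>{0..\<delta>}. \<bar>\<xi> \<phi> - gamma_b p \<beta> * \<phi> powr ((p + 1) / 3)\<bar> \<le> \<phi> powr q)}"

definition Trhs :: "real \<Rightarrow> real \<Rightarrow> (real \<Rightarrow> real) \<Rightarrow> real \<Rightarrow> real" where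
  "Trhs p \<beta> \<xi> \<phi> = (alpha p ^ 2 * \<xi> \<phi> + \<phi> powr p * inverse (\<xi> \<phi>)) /
                      (alpha p * (alpha p - 1) * \<phi> - \<beta> * \<xi> \<phi>)"

text \<open>T xi: zeta(0) = 0 and zeta' = Trhs, i.e. zeta(phi) = integral of Trhs over [0,phi].\<close>
definition Tmap :: "real \<Rightarrow> real \<Rightarrow> (real \<Rightarrow> real) \<Rightarrow> real \<Rightarrow> real" where
  "Tmap p \<beta> \<xi> \<phi> = integral {0..\<phi>} (Trhs p \<beta> \<xi>)"

definition supdist :: "real \<Rightarrow> (real \<Rightarrow> real) \<Rightarrow> (real \<Rightarrow> real) \<Rightarrow> real" where
  "supdist \<delta> f g = (SUP \<phi>\<in>{0..\<delta>}. \<bar>f \<phi> - g \<phi>\<bar>)"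

end

theory Submission
  imports Defs "HOL-Complex_Analysis.Great_Picard"
begin

(* Write s = (p+1)/3 and gamma = gamma_b p beta, so that b gamma^3 s = 1 with b = -beta. Putting
   u = gamma x^s (1 + e), the right-hand side of the ODE becomes s gamma x^(s-1) times
   (l (1+e)^2 + 1) / ((1+e) (1+e+m)), where l and m are of order x^(1-s). On Gamma one has
   |e| <= x^(q-s) / gamma, and for q > 2s and small x this quotient differs from 1 by at most
   (q/s) |e|; integrating, T xi stays within x^q of gamma x^s, so T maps Gamma into itself.
   The same normalization makes the right-hand side Lipschitz in u with constant O(1/x);
   interpolating with the crude bound O(x^(s-1)) gives an integrable majorant of order sqrt d
   when xi and eta are d-close, hence continuity of T. Finally |(T xi)'| <= M x^(s-1) makes
   T(Gamma) uniformly bounded and equicontinuous, and Arzela-Ascoli gives compactness. *)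

definition ode_rhs :: "real \<Rightarrow> real \<Rightarrow> real \<Rightarrow> real \<Rightarrow> real \<Rightarrow> real \<Rightarrow> real" where
  "ode_rhs A B b P x u = (A * u + P * inverse u) / (B * x + b * u)"

definition normalized_rhs :: "real \<Rightarrow> real \<Rightarrow> real \<Rightarrow> real" where
  "normalized_rhs l m e = (l * (1 + e)^2 + 1) / ((1 + e) * (1 + e + m))"

lemma Trhs_eq_ode_rhs:
  "Trhs p \<beta> \<xi> x = ode_rhs (alpha p ^ 2) (alpha p * (alpha p - 1)) (- \<beta>) (x powr p) x (\<xi> x)"
  by (simp add: Trhs_def ode_rhs_def)

lemma normalized_rhs_near_one:
  fixes e \<theta> l m t0 L :: real
  assumes e: "\<bar>e\<bar> \<le> \<theta>" and \<theta>: "\<theta> \<le> t0" and l: "0 \<le> l" "l \<le> t0 * \<theta>" and m: "0 \<le> m" "m \<le> t0 * \<theta>"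
    and L: "2 < L" "t0 * (2 * L + 7) \<le> L - 2" and t0: "t0 \<le> 1/2"
  shows "\<bar>normalized_rhs l m e - 1\<bar> \<le> L * \<theta>"
proof -
  have \<theta>0: "0 \<le> \<theta>" and t00: "0 \<le> t0" using e \<theta> by linarith+
  have v: "1/2 \<le> 1 + e" "1 + e \<le> 3/2" using e \<theta> t0 by auto
  define D where "D = (1 + e) * (1 + e + m)"
  have "(1 - \<theta>) * (1 - \<theta>) \<le> D"
    unfolding D_def by (rule mult_mono) (use e \<theta> m t0 in auto)
  moreover have "1 - 2 * \<theta> \<le> (1 - \<theta>) * (1 - \<theta>)" by (simp add: algebra_simps)
  ultimately have D: "1 - 2 * t0 \<le> D" using \<theta> by linarith
  have Dpos: "0 < D" unfolding D_def using v m by simp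
  define N where "N = l * (1 + e)^2 - 2 * e - e^2 - m * (1 + e)"
  have eq: "normalized_rhs l m e - 1 = N / D"
    using Dpos unfolding normalized_rhs_def N_def D_def by (simp add: field_simps power2_eq_square)
  have "(1 + e)^2 \<le> 9/4" using power_mono[of "1 + e" "3/2" 2] v by (simp add: power2_eq_square)
  then have N1: "l * (1 + e)^2 \<le> t0 * \<theta> * (9/4)" using l by (meson mult_mono zero_le_power2 order_trans)
  have N2: "e^2 \<le> t0 * \<theta>"
    using mult_mono[of "\<bar>e\<bar>" \<theta> "\<bar>e\<bar>" t0] e \<theta> \<theta>0 by (simp add: power2_eq_square abs_mult mult.commute)
  have N3: "m * (1 + e) \<le> t0 * \<theta> * (3/2)"
    using mult_mono[of m "t0 * \<theta>" "1 + e" "3/2"] m v \<theta>0 t00 by simp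
  have "0 \<le> l * (1 + e)^2" "0 \<le> m * (1 + e)" using l m v by auto
  then have "\<bar>N\<bar> \<le> l * (1 + e)^2 + 2 * \<bar>e\<bar> + e^2 + m * (1 + e)"
    unfolding N_def abs_le_iff using zero_le_power2[of e] by linarith
  also have "\<dots> \<le> 2 * \<theta> + 7 * (t0 * \<theta>)"
    using N1 N2 N3 e mult_nonneg_nonneg[OF t00 \<theta>0] by linarith
  also have "\<dots> = \<theta> * (2 + 7 * t0)" by (simp add: algebra_simps)
  also have "\<dots> \<le> \<theta> * (L * D)"
  proof (rule mult_left_mono)
    have "2 + 7 * t0 \<le> L * (1 - 2 * t0)" using L by (simp add: algebra_simps)
    also have "\<dots> \<le> L * D" using D L by simp
    finally show "2 + 7 * t0 \<le> L * D" .
  qed (fact \<theta>0)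
  finally have "\<bar>N\<bar> / D \<le> L * \<theta>" using Dpos by (simp add: divide_le_eq mult_ac)
  then show ?thesis unfolding eq using Dpos by (simp add: abs_divide)
qed

lemma normalized_rhs_lipschitz:
  fixes e1 e2 l m :: real
  assumes e: "\<bar>e1\<bar> \<le> 1/2" "\<bar>e2\<bar> \<le> 1/2" and l: "0 \<le> l" "l \<le> 1" and m: "0 \<le> m" "m \<le> 1"
  shows "\<bar>normalized_rhs l m e1 - normalized_rhs l m e2\<bar> \<le> 100 * \<bar>e1 - e2\<bar>"
proof -
  define v1 v2 where "v1 = 1 + e1" and "v2 = 1 + e2"
  have v: "1/2 \<le> v1" "v1 \<le> 3/2" "1/2 \<le> v2" "v2 \<le> 3/2" using e unfolding v1_def v2_def by auto
  define D where "D = v1 * v2 * (v1 + m) * (v2 + m)"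
  have "(1/2 * (1/2)) * (1/2 * (1/2)) \<le> (v1 * v2) * ((v1 + m) * (v2 + m))"
    using v m by (intro mult_mono) auto
  then have D: "1/16 \<le> D" unfolding D_def by (simp add: mult.assoc)
  have pos: "0 < v1" "0 < v2" "0 < v1 + m" "0 < v2 + m" using v m by auto
  have "normalized_rhs l m e1 - normalized_rhs l m e2
      = ((l * v1^2 + 1) * (v2 * (v2 + m)) - (l * v2^2 + 1) * (v1 * (v1 + m))) / ((v1 * (v1 + m)) * (v2 * (v2 + m)))"
    unfolding normalized_rhs_def v1_def[symmetric] v2_def[symmetric] using pos by (simp add: diff_frac_eq)
  also have "(l * v1^2 + 1) * (v2 * (v2 + m)) - (l * v2^2 + 1) * (v1 * (v1 + m))
      = (v1 - v2) * (l * m * v1 * v2 - v1 - v2 - m)"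
    by (simp add: power2_eq_square algebra_simps)
  also have "(v1 * (v1 + m)) * (v2 * (v2 + m)) = D" unfolding D_def by (simp add: algebra_simps)
  finally have eq: "normalized_rhs l m e1 - normalized_rhs l m e2 = (v1 - v2) * (l * m * v1 * v2 - v1 - v2 - m) / D" .
  have "l * m \<le> 1" "v1 * v2 \<le> 3/2 * (3/2)"
    using l m v mult_mono[of v1 "3/2" v2 "3/2"] by (auto intro: mult_le_one)
  then have "0 \<le> l * m * (v1 * v2)" "l * m * (v1 * v2) \<le> 1 * (9/4)"
    using l m v mult_mono[of "l * m" 1 "v1 * v2" "9/4"] by auto
  then have "0 \<le> l * m * v1 * v2" "l * m * v1 * v2 \<le> 9/4" by (simp_all add: mult.assoc)
  then have K: "\<bar>l * m * v1 * v2 - v1 - v2 - m\<bar> \<le> 25/4"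
    unfolding abs_le_iff using v m by linarith
  have "\<bar>(v1 - v2) * (l * m * v1 * v2 - v1 - v2 - m) / D\<bar> = \<bar>v1 - v2\<bar> * \<bar>l * m * v1 * v2 - v1 - v2 - m\<bar> / D"
    using D by (simp add: abs_mult)
  also have "\<dots> \<le> \<bar>v1 - v2\<bar> * (25/4) / D"
    using K D by (intro divide_right_mono mult_left_mono) auto
  also have "\<dots> \<le> \<bar>v1 - v2\<bar> * (25/4) / (1/16)" using D by (intro divide_left_mono) auto
  finally show ?thesis unfolding eq v1_def v2_def by simp
qed

lemma ode_rhs_rescaled:
  fixes A B b g P x u :: real
  assumes "0 < b" "0 \<le> B" "0 < x" "0 < g" "0 < P" "0 < u"
  shows "ode_rhs A B b P x u = P / (b * g^2) * normalized_rhs (A * g^2 / P) (B * x / (b * g)) (u / g - 1)"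
proof -
  have d: "0 < B * x + b * u" using assms by (simp add: add_nonneg_pos)
  have "normalized_rhs (A * g^2 / P) (B * x / (b * g)) (u / g - 1)
      = ((A * u^2 + P) / P) / (u * (B * x + b * u) / (b * g^2))"
    unfolding normalized_rhs_def using assms by (simp add: field_simps power2_eq_square)
  moreover have "ode_rhs A B b P x u = (A * u^2 + P) / (u * (B * x + b * u))"
    unfolding ode_rhs_def using assms d by (simp add: field_simps power2_eq_square)
  moreover have "P / Z * ((Q / P) / (W / Z)) = Q / W" if "Z \<noteq> 0" "W \<noteq> 0" for Q W Z :: real
    using that \<open>0 < P\<close> by (simp add: field_simps)
  ultimately show ?thesis using assms d by simp
qed

lemma relative_deviation:
  fixes u g \<theta> :: real
  assumes "0 < g" "\<bar>u - g\<bar> \<le> \<theta> * g" "\<theta> \<le> 1/2"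
  shows "\<bar>u / g - 1\<bar> \<le> \<theta>" "0 < u"
proof -
  have "u / g - 1 = (u - g) / g" using assms(1) by (simp add: field_simps)
  then have "\<bar>u / g - 1\<bar> = \<bar>u - g\<bar> / g" using assms(1) by (simp add: abs_divide)
  then show "\<bar>u / g - 1\<bar> \<le> \<theta>" using assms(1,2) by (simp add: divide_le_eq mult.commute)
  have "\<theta> * g \<le> g / 2" using mult_right_mono[of \<theta> "1/2" g] assms by simp
  then show "0 < u" using assms(1,2) unfolding abs_le_iff by linarith
qed

lemma ode_rhs_near_scale:
  fixes A B b g P x u \<theta> t0 L :: real
  assumes "0 < b" "0 \<le> B" "0 \<le> A" "0 < x" "0 < g" "0 < P"
    and dev: "\<bar>u - g\<bar> \<le> \<theta> * g" and \<theta>: "\<theta> \<le> t0"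
    and l: "A * g^2 / P \<le> t0 * \<theta>" and m: "B * x / (b * g) \<le> t0 * \<theta>"
    and L: "2 < L" "t0 * (2 * L + 7) \<le> L - 2" and t0: "t0 \<le> 1/2"
  shows "0 < u" "\<bar>ode_rhs A B b P x u - P / (b * g^2)\<bar> \<le> P / (b * g^2) * (L * \<theta>)"
proof -
  have e: "\<bar>u / g - 1\<bar> \<le> \<theta>" and u: "0 < u"
    using relative_deviation[OF \<open>0 < g\<close> dev] \<theta> t0 by auto
  show "0 < u" by (fact u)
  have "\<bar>normalized_rhs (A * g^2 / P) (B * x / (b * g)) (u / g - 1) - 1\<bar> \<le> L * \<theta>"
    by (rule normalized_rhs_near_one[OF e \<theta> _ l _ m L t0]) (use assms in auto)
  moreover have c: "0 < P / (b * g^2)" using assms by simp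
  moreover have "ode_rhs A B b P x u - P / (b * g^2)
      = P / (b * g^2) * (normalized_rhs (A * g^2 / P) (B * x / (b * g)) (u / g - 1) - 1)"
    unfolding ode_rhs_rescaled[OF assms(1,2,4,5,6) u] by (simp add: algebra_simps)
  ultimately show "\<bar>ode_rhs A B b P x u - P / (b * g^2)\<bar> \<le> P / (b * g^2) * (L * \<theta>)"
    by (simp only: abs_mult abs_of_pos[OF c] mult_left_mono less_imp_le)
qed

lemma ode_rhs_lipschitz_near_scale:
  fixes A B b g P x u v \<theta> t0 :: real
  assumes "0 < b" "0 \<le> B" "0 \<le> A" "0 < x" "0 < g" "0 < P"
    and dev: "\<bar>u - g\<bar> \<le> \<theta> * g" "\<bar>v - g\<bar> \<le> \<theta> * g" and \<theta>: "\<theta> \<le> t0"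
    and l: "A * g^2 / P \<le> t0 * \<theta>" and m: "B * x / (b * g) \<le> t0 * \<theta>" and t0: "t0 \<le> 1/2"
  shows "\<bar>ode_rhs A B b P x u - ode_rhs A B b P x v\<bar> \<le> P / (b * g^2) * (100 * \<bar>u - v\<bar> / g)"
proof -
  have eu: "\<bar>u / g - 1\<bar> \<le> \<theta>" and u: "0 < u"
    using relative_deviation[OF \<open>0 < g\<close> dev(1)] \<theta> t0 by auto
  have ev: "\<bar>v / g - 1\<bar> \<le> \<theta>" and v: "0 < v"
    using relative_deviation[OF \<open>0 < g\<close> dev(2)] \<theta> t0 by auto
  have "0 \<le> \<theta>" using eu by linarith
  then have "t0 * \<theta> \<le> 1" using \<theta> t0 mult_mono[of t0 1 \<theta> 1] by simp
  then have "A * g^2 / P \<le> 1" "B * x / (b * g) \<le> 1" using l m by linarith+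
  moreover have "0 \<le> A * g^2 / P" "0 \<le> B * x / (b * g)" using assms by simp_all
  moreover have "\<bar>u / g - 1\<bar> \<le> 1/2" "\<bar>v / g - 1\<bar> \<le> 1/2" using eu ev \<theta> t0 by linarith+
  ultimately have "\<bar>normalized_rhs (A * g^2 / P) (B * x / (b * g)) (u / g - 1)
      - normalized_rhs (A * g^2 / P) (B * x / (b * g)) (v / g - 1)\<bar> \<le> 100 * \<bar>(u / g - 1) - (v / g - 1)\<bar>"
    by (intro normalized_rhs_lipschitz)
  moreover have "\<bar>(u / g - 1) - (v / g - 1)\<bar> = \<bar>u - v\<bar> / g"
    using \<open>0 < g\<close> by (simp add: diff_divide_distrib[symmetric] abs_divide)
  moreover have c: "0 < P / (b * g^2)" using assms by simp
  moreover have "ode_rhs A B b P x u - ode_rhs A B b P x v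
      = P / (b * g^2) * (normalized_rhs (A * g^2 / P) (B * x / (b * g)) (u / g - 1)
          - normalized_rhs (A * g^2 / P) (B * x / (b * g)) (v / g - 1))"
    unfolding ode_rhs_rescaled[OF assms(1,2,4,5,6) u] ode_rhs_rescaled[OF assms(1,2,4,5,6) v]
    by (simp add: algebra_simps)
  ultimately show ?thesis by (simp only: abs_mult abs_of_pos[OF c] mult_left_mono less_imp_le)
qed

lemma rescaling_parameters_small:
  fixes A B b \<gamma> s p q t0 x :: real
  assumes "0 < b" "0 \<le> A" "0 \<le> B" "0 < \<gamma>" "p = 3 * s - 1" "0 < x"
    and small: "x powr (q - s) \<le> t0 * \<gamma>" "A * \<gamma>^3 * x powr (1 - q) \<le> t0" "B / b * x powr (1 - q) \<le> t0"
  shows "x powr (q - s) / \<gamma> \<le> t0"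
    "A * (\<gamma> * x powr s)^2 / x powr p \<le> t0 * (x powr (q - s) / \<gamma>)"
    "B * x / (b * (\<gamma> * x powr s)) \<le> t0 * (x powr (q - s) / \<gamma>)"
proof -
  have split: "x powr (1 - s) = x powr (1 - q) * x powr (q - s)" using \<open>0 < x\<close> by (simp add: powr_add[symmetric])
  have \<theta>: "0 \<le> x powr (q - s) / \<gamma>" using \<open>0 < \<gamma>\<close> by simp
  show "x powr (q - s) / \<gamma> \<le> t0" using small(1) \<open>0 < \<gamma>\<close> by (simp add: divide_le_eq)
  have "(x powr s)^2 / x powr p = x powr (1 - s)"
    using assms(5,6) by (simp add: power2_eq_square powr_add[symmetric] powr_diff[symmetric])
  moreover have "A * (\<gamma> * x powr s)^2 / x powr p = A * \<gamma>^2 * ((x powr s)^2 / x powr p)"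
    by (simp add: power_mult_distrib)
  ultimately have "A * (\<gamma> * x powr s)^2 / x powr p = (A * \<gamma>^3 * x powr (1 - q)) * (x powr (q - s) / \<gamma>)"
    using \<open>0 < \<gamma>\<close> unfolding split by (simp add: field_simps power2_eq_square power3_eq_cube)
  also have "\<dots> \<le> t0 * (x powr (q - s) / \<gamma>)" using small(2) \<theta> by (rule mult_right_mono)
  finally show "A * (\<gamma> * x powr s)^2 / x powr p \<le> t0 * (x powr (q - s) / \<gamma>)" .
  have "x / x powr s = x powr (1 - s)" using \<open>0 < x\<close> by (simp add: powr_diff)
  then have "B * x / (b * (\<gamma> * x powr s)) = (B / b * x powr (1 - q)) * (x powr (q - s) / \<gamma>)"
    using \<open>0 < \<gamma>\<close> \<open>0 < b\<close> \<open>0 < x\<close> unfolding split by (simp add: field_simps)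
  also have "\<dots> \<le> t0 * (x powr (q - s) / \<gamma>)" using small(3) \<theta> by (rule mult_right_mono)
  finally show "B * x / (b * (\<gamma> * x powr s)) \<le> t0 * (x powr (q - s) / \<gamma>)" .
qed

lemma power_scale_leading_term:
  fixes b \<gamma> s p x :: real
  assumes "0 < b" "0 < \<gamma>" "b * \<gamma>^3 * s = 1" "p = 3 * s - 1" "0 < x"
  shows "x powr p / (b * (\<gamma> * x powr s)^2) = \<gamma> * s * x powr (s - 1)"
proof -
  have "x powr p / (x powr s)^2 = x powr (s - 1)"
    using assms(4,5) by (simp add: power2_eq_square powr_add[symmetric] powr_diff[symmetric])
  moreover have "\<gamma> * s = 1 / (b * \<gamma>^2)"
    using assms(1-3) by (simp add: field_simps power2_eq_square power3_eq_cube mult_ac)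
  moreover have "x powr p / (b * (\<gamma> * x powr s)^2) = x powr p / (x powr s)^2 / (b * \<gamma>^2)"
    by (simp add: power_mult_distrib mult_ac)
  ultimately show ?thesis by simp
qed

lemma ode_rhs_near_power:
  fixes A B b \<gamma> s p q t0 x u :: real
  assumes "0 < b" "0 \<le> A" "0 \<le> B" "0 < \<gamma>" "p = 3 * s - 1" "0 < x"
    and small: "x powr (q - s) \<le> t0 * \<gamma>" "A * \<gamma>^3 * x powr (1 - q) \<le> t0" "B / b * x powr (1 - q) \<le> t0"
    and \<gamma>: "b * \<gamma>^3 * s = 1" and q: "2 * s < q"
    and t0: "t0 \<le> 1/2" "t0 * (2 * (q / s) + 7) \<le> q / s - 2"
    and dev: "\<bar>u - \<gamma> * x powr s\<bar> \<le> x powr q"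
  shows "0 < u" "\<bar>ode_rhs A B b (x powr p) x u - \<gamma> * s * x powr (s - 1)\<bar> \<le> q * x powr (q - 1)"
proof -
  have "s = 1 / (b * \<gamma>^3)" using \<gamma> \<open>0 < b\<close> \<open>0 < \<gamma>\<close> by (simp add: field_simps)
  then have "0 < s" using \<open>0 < b\<close> \<open>0 < \<gamma>\<close> by simp
  then have L: "2 < q / s" using q by (simp add: field_simps)
  note small' = rescaling_parameters_small[OF assms(1-6) small]
  have "x powr (q - s) / \<gamma> * (\<gamma> * x powr s) = x powr q"
    using \<open>0 < \<gamma>\<close> \<open>0 < x\<close> by (simp add: powr_add[symmetric])
  then have "\<bar>u - \<gamma> * x powr s\<bar> \<le> x powr (q - s) / \<gamma> * (\<gamma> * x powr s)" using dev by simp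
  note near = ode_rhs_near_scale[OF assms(1,3,2,6) _ _ this small' L t0(2,1)]
  then show "0 < u" using \<open>0 < \<gamma>\<close> \<open>0 < x\<close> by simp
  note lead = power_scale_leading_term[OF \<open>0 < b\<close> \<open>0 < \<gamma>\<close> \<gamma> assms(5,6)]
  have "\<gamma> * s * x powr (s - 1) * (q / s * (x powr (q - s) / \<gamma>)) = q * (x powr (s - 1) * x powr (q - s))"
    using \<open>0 < s\<close> \<open>0 < \<gamma>\<close> by simp
  also have "\<dots> = q * x powr (q - 1)" using \<open>0 < x\<close> by (simp add: powr_add[symmetric])
  finally show "\<bar>ode_rhs A B b (x powr p) x u - \<gamma> * s * x powr (s - 1)\<bar> \<le> q * x powr (q - 1)"
    using near(2) \<open>0 < \<gamma>\<close> \<open>0 < x\<close> unfolding lead by simp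
qed

lemma ode_rhs_lipschitz_near_power:
  fixes A B b \<gamma> s p q t0 x u v :: real
  assumes "0 < b" "0 \<le> A" "0 \<le> B" "0 < \<gamma>" "p = 3 * s - 1" "0 < x"
    and small: "x powr (q - s) \<le> t0 * \<gamma>" "A * \<gamma>^3 * x powr (1 - q) \<le> t0" "B / b * x powr (1 - q) \<le> t0"
    and \<gamma>: "b * \<gamma>^3 * s = 1" and t0: "t0 \<le> 1/2"
    and dev: "\<bar>u - \<gamma> * x powr s\<bar> \<le> x powr q" "\<bar>v - \<gamma> * x powr s\<bar> \<le> x powr q"
  shows "\<bar>ode_rhs A B b (x powr p) x u - ode_rhs A B b (x powr p) x v\<bar> \<le> 100 * s * \<bar>u - v\<bar> / x"
proof -
  note small' = rescaling_parameters_small[OF assms(1-6) small]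
  have "x powr (q - s) / \<gamma> * (\<gamma> * x powr s) = x powr q"
    using \<open>0 < \<gamma>\<close> \<open>0 < x\<close> by (simp add: powr_add[symmetric])
  then have "\<bar>u - \<gamma> * x powr s\<bar> \<le> x powr (q - s) / \<gamma> * (\<gamma> * x powr s)"
    "\<bar>v - \<gamma> * x powr s\<bar> \<le> x powr (q - s) / \<gamma> * (\<gamma> * x powr s)" using dev by simp_all
  note lip = ode_rhs_lipschitz_near_scale[OF assms(1,3,2,6) _ _ this small' t0]
  note lead = power_scale_leading_term[OF \<open>0 < b\<close> \<open>0 < \<gamma>\<close> \<gamma> assms(5,6)]
  have "x powr (s - 1) / x powr s = 1 / x" using \<open>0 < x\<close> by (simp add: powr_diff[symmetric] powr_minus_divide)
  then have "\<gamma> * s * x powr (s - 1) * (100 * \<bar>u - v\<bar> / (\<gamma> * x powr s)) = 100 * s * \<bar>u - v\<bar> / x"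
    using \<open>0 < \<gamma>\<close> \<open>0 < x\<close> by (simp add: field_simps)
  then show ?thesis using lip \<open>0 < \<gamma>\<close> \<open>0 < x\<close> unfolding lead by simp
qed

lemma continuous_on_Trhs:
  assumes "0 \<le> p" "p < 2" "\<beta> < 0" "continuous_on S \<xi>" and pos: "\<And>x. x \<in> S \<Longrightarrow> 0 < x \<and> 0 < \<xi> x"
  shows "continuous_on S (Trhs p \<beta> \<xi>)"
proof -
  have "1 \<le> alpha p" using assms(1,2) by (simp add: alpha_def field_simps)
  then have "alpha p * (alpha p - 1) * x - \<beta> * \<xi> x \<noteq> 0" if "x \<in> S" for x
    using pos[OF that] \<open>\<beta> < 0\<close> by (smt (verit) mult_nonneg_nonneg mult_neg_pos)
  moreover have "\<xi> x \<noteq> 0" "0 < x" if "x \<in> S" for x using pos[OF that] by auto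
  ultimately show ?thesis unfolding Trhs_def using assms(4) by (intro continuous_intros) auto
qed

lemma eventually_at_right_0_powr_le:
  fixes a c \<epsilon> :: real
  assumes "0 < a" "0 < \<epsilon>"
  shows "\<forall>\<^sub>F x in at_right 0. c * x powr a \<le> \<epsilon>"
proof -
  have "((\<lambda>x. x powr a) \<longlongrightarrow> 0) (at_right (0::real))"
    by (rule tendsto_zero_powrI[OF tendsto_ident_at tendsto_const _ \<open>0 < a\<close>])
      (auto intro: eventually_mono[OF eventually_at_right_less])
  then have "((\<lambda>x. c * x powr a) \<longlongrightarrow> 0) (at_right (0::real))" by (rule tendsto_mult_right_zero)
  from order_tendstoD(2)[OF this \<open>0 < \<epsilon>\<close>] show ?thesis by (rule eventually_mono) simp
qed

lemma has_integral_scaled_powr_from_0: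
  fixes a k \<phi> :: real
  assumes "0 < a" "0 \<le> \<phi>"
  shows "((\<lambda>t. k * a * t powr (a - 1)) has_integral k * \<phi> powr a) {0..\<phi>}"
  using has_integral_mult_right[OF has_integral_powr_from_0[of "a - 1" \<phi>], of "k * a"] assms by simp

lemma integrable_on_Icc_if_dominated:
  fixes f h :: "real \<Rightarrow> real"
  assumes "continuous_on {0<..\<phi>} f" "\<And>t. t \<in> {0..\<phi>} \<Longrightarrow> \<bar>f t\<bar> \<le> h t" "h integrable_on {0..\<phi>}"
  shows "f integrable_on {0..\<phi>}"
proof -
  have n1: "negligible {x \<in> {0..\<phi>} - {0<..\<phi>}. g x \<noteq> 0}" for g :: "real \<Rightarrow> real"
    by (rule negligible_subset[of "{0}"]) auto
  have n2: "negligible {x \<in> {0<..\<phi>} - {0..\<phi>}. g x \<noteq> 0}" for g :: "real \<Rightarrow> real"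
    by (rule negligible_subset[of "{}"]) auto
  have h: "h integrable_on {0<..\<phi>}" by (rule integrable_spike_set[OF assms(3) n1 n2])
  have S: "{0<..\<phi>} \<in> sets lebesgue" by simp
  have "f \<in> borel_measurable (lebesgue_on {0<..\<phi>})"
    by (rule continuous_imp_measurable_on_sets_lebesgue[OF assms(1) S])
  then have "f integrable_on {0<..\<phi>}"
    by (rule measurable_bounded_by_integrable_imp_integrable_real[OF _ h _ S]) (use assms(2) in auto)
  then show ?thesis by (rule integrable_spike_set[OF _ n2 n1])
qed

lemma integral_near_if_pointwise_near:
  fixes f g r :: "real \<Rightarrow> real"
  assumes "continuous_on {0<..\<phi>} f" "continuous_on {0<..\<phi>} g"
    and g: "(g has_integral G) {0..\<phi>}" and r: "(r has_integral R) {0..\<phi>}"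
    and near: "\<And>t. t \<in> {0..\<phi>} \<Longrightarrow> \<bar>f t - g t\<bar> \<le> r t"
  shows "f integrable_on {0..\<phi>}" "\<bar>integral {0..\<phi>} f - G\<bar> \<le> R"
proof -
  have fg: "(\<lambda>t. f t - g t) integrable_on {0..\<phi>}"
  proof (rule integrable_on_Icc_if_dominated)
    show "continuous_on {0<..\<phi>} (\<lambda>t. f t - g t)" using assms(1,2) by (rule continuous_on_diff)
    show "r integrable_on {0..\<phi>}" using r by (rule has_integral_integrable)
  qed (fact near)
  then have "(\<lambda>t. (f t - g t) + g t) integrable_on {0..\<phi>}"
    by (rule integrable_add[OF _ has_integral_integrable[OF g]])
  then show f: "f integrable_on {0..\<phi>}" by simp
  have "integral {0..\<phi>} f - G = integral {0..\<phi>} (\<lambda>t. f t - g t)"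
    using integral_diff[OF f has_integral_integrable[OF g]] integral_unique[OF g] by simp
  also have "\<bar>\<dots>\<bar> \<le> integral {0..\<phi>} r"
    using integral_norm_bound_integral[OF fg has_integral_integrable[OF r]] near by simp
  also have "\<dots> = R" using r by (rule integral_unique)
  finally show "\<bar>integral {0..\<phi>} f - G\<bar> \<le> R" .
qed

lemma integral_increment_le:
  fixes f h H :: "real \<Rightarrow> real"
  assumes f: "f integrable_on {0..x}" and bound: "\<And>t. t \<in> {0..x} \<Longrightarrow> \<bar>f t\<bar> \<le> h t"
    and H: "\<And>t. 0 \<le> t \<Longrightarrow> (h has_integral H t) {0..t}" and y: "0 \<le> y" "y \<le> x"
  shows "\<bar>integral {0..x} f - integral {0..y} f\<bar> \<le> H x - H y"
proof -
  have "0 \<le> x" using y by linarith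
  have h: "h integrable_on {0..x}" using H[OF \<open>0 \<le> x\<close>] by (rule has_integral_integrable)
  have "integral {0..x} f - integral {0..y} f = integral {y..x} f"
    using Henstock_Kurzweil_Integration.integral_combine[OF y f] by linarith
  then have "\<bar>integral {0..x} f - integral {0..y} f\<bar> = norm (integral {y..x} f)" by simp
  also have "\<dots> \<le> integral {y..x} h"
  proof (rule integral_norm_bound_integral)
    show "f integrable_on {y..x}" by (rule integrable_subinterval_real[OF f]) (use y in auto)
    show "h integrable_on {y..x}" by (rule integrable_subinterval_real[OF h]) (use y in auto)
    show "norm (f t) \<le> h t" if "t \<in> {y..x}" for t using bound[of t] that y by simp
  qed
  also have "\<dots> = integral {0..x} h - integral {0..y} h"
    using Henstock_Kurzweil_Integration.integral_combine[OF y h] by linarith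
  also have "\<dots> = H x - H y" using integral_unique[OF H[OF \<open>0 \<le> x\<close>]] integral_unique[OF H[OF y(1)]] by simp
  finally show ?thesis .
qed

lemma abs_le_supdist:
  assumes "continuous_on {0..\<delta>} f" "continuous_on {0..\<delta>} g" "t \<in> {0..\<delta>}"
  shows "\<bar>f t - g t\<bar> \<le> supdist \<delta> f g"
proof -
  have "compact ((\<lambda>t. \<bar>f t - g t\<bar>) ` {0..\<delta>})"
    using assms by (intro compact_continuous_image continuous_intros) auto
  then have "bdd_above ((\<lambda>t. \<bar>f t - g t\<bar>) ` {0..\<delta>})" by (simp add: bounded_imp_bdd_above compact_imp_bounded)
  then show ?thesis unfolding supdist_def by (rule cSUP_upper[OF assms(3)])
qed

lemma supdist_le:
  assumes "0 \<le> \<delta>" "\<And>t. t \<in> {0..\<delta>} \<Longrightarrow> \<bar>f t - g t\<bar> \<le> e"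
  shows "supdist \<delta> f g \<le> e"
  unfolding supdist_def using assms by (intro cSUP_least) auto

lemma uniformly_convergent_subsequence:
  fixes F :: "nat \<Rightarrow> real \<Rightarrow> real"
  assumes bounded: "\<And>n x. x \<in> {a..b} \<Longrightarrow> \<bar>F n x\<bar> \<le> M" and H: "continuous_on {a..b} H"
    and modulus: "\<And>n x y. a \<le> y \<Longrightarrow> y \<le> x \<Longrightarrow> x \<le> b \<Longrightarrow> \<bar>F n x - F n y\<bar> \<le> H x - H y"
  shows "\<exists>r g. strict_mono r \<and> continuous_on {a..b} g \<and>
    uniform_limit {a..b} (\<lambda>n. F (r n)) g sequentially"
proof -
  have modulus': "\<bar>F n x - F n y\<bar> \<le> \<bar>H x - H y\<bar>" if "x \<in> {a..b}" "y \<in> {a..b}" for n x y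
    using modulus[of y x n] modulus[of x y n] that by (cases "y \<le> x") (auto simp: abs_minus_commute)
  have equicont: "\<exists>d>0. \<forall>n y. y \<in> {a..b} \<and> norm (x - y) < d \<longrightarrow> norm (F n x - F n y) < e"
    if x: "x \<in> {a..b}" and "0 < e" for x e
  proof -
    obtain d where "0 < d" and d: "\<And>y. y \<in> {a..b} \<Longrightarrow> dist y x < d \<Longrightarrow> dist (H y) (H x) < e"
      using H x \<open>0 < e\<close> unfolding continuous_on_iff by blast
    show ?thesis
    proof (intro exI[of _ d] conjI allI impI \<open>0 < d\<close>)
      fix n y assume y: "y \<in> {a..b} \<and> norm (x - y) < d"
      then have "dist y x < d" by (simp add: dist_commute dist_norm)
      then have "dist (H y) (H x) < e" using d[of y] y by auto
      then have "dist (H x) (H y) < e" by (simp add: dist_commute)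
      then show "norm (F n x - F n y) < e" using modulus'[OF x, of y n] y by (simp add: dist_real_def)
    qed
  qed
  have bounded': "norm (F n x) \<le> M" if "x \<in> {a..b}" for n x using bounded[OF that] by simp
  show ?thesis
  proof (rule Arzela_Ascoli[OF compact_Icc bounded' equicont])
    fix g r assume g: "continuous_on {a..b} g" and r: "strict_mono (r :: nat \<Rightarrow> nat)"
      and conv: "\<And>e. 0 < e \<Longrightarrow> \<exists>N. \<forall>n x. n \<ge> N \<and> x \<in> {a..b} \<longrightarrow> norm (F (r n) x - g x) < e"
    have "uniform_limit {a..b} (\<lambda>n. F (r n)) g sequentially"
      unfolding uniform_limit_sequentially_iff dist_norm using conv by blast
    with r g show ?thesis by blast
  qed
qed

locale Trhs_pointwise_estimates =
  fixes p \<beta> q \<delta> C :: real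
  assumes delta_pos: "0 < \<delta>" and delta_le_1: "\<delta> \<le> 1"
    and exponent_pos: "0 < (p + 1) / 3" and exponent_le_q: "(p + 1) / 3 \<le> q" and q_lt_1: "q < 1"
    and lipschitz_nonneg: "0 \<le> C"
    and Trhs_continuous: "\<And>\<xi>. \<xi> \<in> Gamma p \<beta> q \<delta> \<Longrightarrow> continuous_on {0<..\<delta>} (Trhs p \<beta> \<xi>)"
    and Trhs_near_leading: "\<And>\<xi> x. \<xi> \<in> Gamma p \<beta> q \<delta> \<Longrightarrow> x \<in> {0<..\<delta>} \<Longrightarrow>
      \<bar>Trhs p \<beta> \<xi> x - gamma_b p \<beta> * ((p + 1) / 3) * x powr ((p + 1) / 3 - 1)\<bar> \<le> q * x powr (q - 1)"
    and Trhs_lipschitz: "\<And>\<xi> \<eta> x. \<xi> \<in> Gamma p \<beta> q \<delta> \<Longrightarrow> \<eta> \<in> Gamma p \<beta> q \<delta> \<Longrightarrow> x \<in> {0<..\<delta>} \<Longrightarrow>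
      \<bar>Trhs p \<beta> \<xi> x - Trhs p \<beta> \<eta> x\<bar> \<le> C * \<bar>\<xi> x - \<eta> x\<bar> / x"
begin

abbreviation s :: real where "s \<equiv> (p + 1) / 3"
abbreviation \<gamma> :: real where "\<gamma> \<equiv> gamma_b p \<beta>"
abbreviation M :: real where "M \<equiv> \<gamma> * s + q"

lemma gamma_nonneg: "0 \<le> \<gamma>"
  by (simp add: gamma_b_def)

lemma q_pos: "0 < q"
  using exponent_pos exponent_le_q by linarith

lemma Gamma_at_0:
  assumes "\<xi> \<in> Gamma p \<beta> q \<delta>"
  shows "\<xi> 0 = 0"
  using assms delta_pos unfolding Gamma_def by (force dest: bspec[of _ _ 0])

lemma Trhs_at_0: "\<xi> \<in> Gamma p \<beta> q \<delta> \<Longrightarrow> Trhs p \<beta> \<xi> 0 = 0"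
  by (simp add: Trhs_def Gamma_at_0)

lemma Trhs_near_leading_Icc:
  assumes "\<xi> \<in> Gamma p \<beta> q \<delta>" "t \<in> {0..\<delta>}"
  shows "\<bar>Trhs p \<beta> \<xi> t - \<gamma> * s * t powr (s - 1)\<bar> \<le> q * t powr (q - 1)"
  using assms Trhs_near_leading[of \<xi> t] by (cases "t = 0") (auto simp: Trhs_at_0)

lemma Trhs_bound:
  assumes "\<xi> \<in> Gamma p \<beta> q \<delta>" "t \<in> {0..\<delta>}"
  shows "\<bar>Trhs p \<beta> \<xi> t\<bar> \<le> M * t powr (s - 1)"
proof -
  have "t powr (q - 1) \<le> t powr (s - 1)"
    using assms(2) delta_le_1 exponent_le_q by (intro powr_mono') auto
  then have "q * t powr (q - 1) \<le> q * t powr (s - 1)" using q_pos by simp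
  moreover have "0 \<le> \<gamma> * s * t powr (s - 1)" using gamma_nonneg exponent_pos by simp
  ultimately show ?thesis
    using Trhs_near_leading_Icc[OF assms] by (simp add: distrib_right abs_le_iff)
qed

lemma Trhs_integrable_and_Tmap_near_leading:
  assumes "\<xi> \<in> Gamma p \<beta> q \<delta>" "\<phi> \<in> {0..\<delta>}"
  shows "Trhs p \<beta> \<xi> integrable_on {0..\<phi>}" "\<bar>Tmap p \<beta> \<xi> \<phi> - \<gamma> * \<phi> powr s\<bar> \<le> \<phi> powr q"
proof -
  have f: "continuous_on {0<..\<phi>} (Trhs p \<beta> \<xi>)"
    by (rule continuous_on_subset[OF Trhs_continuous[OF assms(1)]]) (use assms(2) in auto)
  have g: "continuous_on {0<..\<phi>} (\<lambda>t. \<gamma> * s * t powr (s - 1))"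
    by (intro continuous_intros) auto
  have G: "((\<lambda>t. \<gamma> * s * t powr (s - 1)) has_integral \<gamma> * \<phi> powr s) {0..\<phi>}"
    using exponent_pos assms(2) by (intro has_integral_scaled_powr_from_0) auto
  have R: "((\<lambda>t. q * t powr (q - 1)) has_integral \<phi> powr q) {0..\<phi>}"
    using has_integral_scaled_powr_from_0[of q \<phi> 1] q_pos assms(2) by simp
  have near: "\<bar>Trhs p \<beta> \<xi> t - \<gamma> * s * t powr (s - 1)\<bar> \<le> q * t powr (q - 1)" if "t \<in> {0..\<phi>}" for t
    using Trhs_near_leading_Icc[OF assms(1)] that assms(2) by simp
  show "Trhs p \<beta> \<xi> integrable_on {0..\<phi>}"
    by (rule integral_near_if_pointwise_near(1)[OF f g G R near])
  show "\<bar>Tmap p \<beta> \<xi> \<phi> - \<gamma> * \<phi> powr s\<bar> \<le> \<phi> powr q"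
    unfolding Tmap_def by (rule integral_near_if_pointwise_near(2)[OF f g G R near])
qed

lemmas Trhs_integrable = Trhs_integrable_and_Tmap_near_leading(1)
lemmas Tmap_near_leading = Trhs_integrable_and_Tmap_near_leading(2)

lemma Tmap_eq_indefinite_integral: "Tmap p \<beta> \<xi> = (\<lambda>u. integral {0..u} (Trhs p \<beta> \<xi>))"
  by (simp add: Tmap_def fun_eq_iff)

lemma Tmap_in_Gamma:
  assumes "\<xi> \<in> Gamma p \<beta> q \<delta>"
  shows "Tmap p \<beta> \<xi> \<in> Gamma p \<beta> q \<delta>"
proof -
  have "continuous_on {0..\<delta>} (Tmap p \<beta> \<xi>)"
    unfolding Tmap_eq_indefinite_integral
    by (rule indefinite_integral_continuous_1[OF Trhs_integrable[OF assms]]) (use delta_pos in auto)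
  then show ?thesis unfolding Gamma_def using Tmap_near_leading[OF assms] by auto
qed

lemma Tmap_has_derivative:
  assumes "\<xi> \<in> Gamma p \<beta> q \<delta>" "\<phi> \<in> {0<..\<delta>}"
  shows "(Tmap p \<beta> \<xi> has_real_derivative Trhs p \<beta> \<xi> \<phi>) (at \<phi> within {0..\<delta>})"
proof -
  have "at \<phi> within {0..\<delta>} = at \<phi> within {0<..\<delta>}"
    by (rule at_within_nhd[of _ "{0<..}"]) (use assms(2) in auto)
  moreover have "continuous (at \<phi> within {0<..\<delta>}) (Trhs p \<beta> \<xi>)"
    using Trhs_continuous[OF assms(1)] assms(2) continuous_on_eq_continuous_within by blast
  ultimately have "((\<lambda>u. integral {0..u} (Trhs p \<beta> \<xi>)) has_vector_derivative Trhs p \<beta> \<xi> \<phi>)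
      (at \<phi> within {0..\<delta>} - {})"
    using Trhs_integrable[OF assms(1), of \<delta>] delta_pos assms(2)
    by (intro integral_has_vector_derivative_continuous_at) auto
  then show ?thesis
    unfolding has_real_derivative_iff_has_vector_derivative Tmap_eq_indefinite_integral by simp
qed

lemma Tmap_increment_le:
  assumes "\<xi> \<in> Gamma p \<beta> q \<delta>" "0 \<le> y" "y \<le> x" "x \<le> \<delta>"
  shows "\<bar>Tmap p \<beta> \<xi> x - Tmap p \<beta> \<xi> y\<bar> \<le> M / s * x powr s - M / s * y powr s"
  unfolding Tmap_def
proof (rule integral_increment_le[where h = "\<lambda>t. M / s * s * t powr (s - 1)"])
  have Ms: "M / s * s = M" using exponent_pos by simp
  show "Trhs p \<beta> \<xi> integrable_on {0..x}" using assms by (intro Trhs_integrable) auto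
  show "\<bar>Trhs p \<beta> \<xi> t\<bar> \<le> M / s * s * t powr (s - 1)" if "t \<in> {0..x}" for t
    using Trhs_bound[OF assms(1), of t] that assms by (subst Ms) auto
  show "((\<lambda>t. M / s * s * t powr (s - 1)) has_integral M / s * t powr s) {0..t}" if "0 \<le> t" for t
    using exponent_pos that by (intro has_integral_scaled_powr_from_0) auto
qed (use assms in auto)

lemma Tmap_bounded:
  assumes "\<xi> \<in> Gamma p \<beta> q \<delta>" "x \<in> {0..\<delta>}"
  shows "\<bar>Tmap p \<beta> \<xi> x\<bar> \<le> \<gamma> + 1"
proof -
  have "x powr s \<le> 1" "x powr q \<le> 1"
    using assms(2) delta_le_1 exponent_pos q_pos by (auto intro: powr_le1)
  then have "\<gamma> * x powr s \<le> \<gamma>" using gamma_nonneg by (simp add: mult_left_le)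
  moreover have "0 \<le> \<gamma> * x powr s" using gamma_nonneg by simp
  ultimately show ?thesis
    using Tmap_near_leading[OF assms] \<open>x powr q \<le> 1\<close> unfolding abs_le_iff by linarith
qed

lemma Gamma_continuous: "\<xi> \<in> Gamma p \<beta> q \<delta> \<Longrightarrow> continuous_on {0..\<delta>} \<xi>"
  by (simp add: Gamma_def)

lemma M_pos: "0 < M"
  using gamma_nonneg exponent_pos q_pos by (simp add: add_nonneg_pos)

lemma Trhs_diff_le:
  assumes \<xi>: "\<xi> \<in> Gamma p \<beta> q \<delta>" and \<eta>: "\<eta> \<in> Gamma p \<beta> q \<delta>"
    and close: "\<And>t. t \<in> {0..\<delta>} \<Longrightarrow> \<bar>\<xi> t - \<eta> t\<bar> \<le> d" and t: "t \<in> {0..\<delta>}"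
  shows "\<bar>Trhs p \<beta> \<xi> t - Trhs p \<beta> \<eta> t\<bar> \<le> sqrt (2 * M * C * d) * t powr (s / 2 - 1)"
proof (cases "t = 0")
  case True
  then show ?thesis using Trhs_at_0[OF \<xi>] Trhs_at_0[OF \<eta>] by simp
next
  case False
  then have t': "t \<in> {0<..\<delta>}" using t by auto
  define D where "D = \<bar>Trhs p \<beta> \<xi> t - Trhs p \<beta> \<eta> t\<bar>"
  have crude: "D \<le> 2 * M * t powr (s - 1)"
    using Trhs_bound[OF \<xi> t] Trhs_bound[OF \<eta> t] unfolding D_def by linarith
  have "D \<le> C * \<bar>\<xi> t - \<eta> t\<bar> / t" unfolding D_def by (rule Trhs_lipschitz[OF \<xi> \<eta> t'])
  also have "\<dots> \<le> C * d / t"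
    using close[OF t] lipschitz_nonneg t' by (intro divide_right_mono mult_left_mono) auto
  finally have fine: "D \<le> C * d / t" .
  \<comment> \<open>the geometric mean of the crude bound and the Lipschitz bound is integrable at 0\<close>
  have "D^2 \<le> (2 * M * t powr (s - 1)) * (C * d / t)"
    unfolding power2_eq_square by (rule mult_mono[OF crude fine]) (use M_pos D_def in auto)
  also have "\<dots> = 2 * M * C * d * t powr (s - 2)"
  proof -
    have e: "s - 2 + 1 = s - 1" by simp
    have "t powr (s - 1) = t powr (s - 2) * t"
      using powr_add[of t "s - 2" 1] t' unfolding e by simp
    moreover have "X * (t powr (s - 2) * t) * (Y / t) = X * Y * t powr (s - 2)" for X Y :: real
      using t' by (simp add: field_simps)
    ultimately show ?thesis by (simp only:)
  qed
  finally have "D \<le> sqrt (2 * M * C * d * t powr (s - 2))" by (rule real_le_rsqrt)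
  also have "\<dots> = sqrt (2 * M * C * d) * t powr (s / 2 - 1)"
  proof -
    have e: "(s - 2) / 2 = s / 2 - 1" by (simp add: field_simps)
    have "t powr ((s - 2) / 2) = sqrt (t powr (s - 2))"
      using t' by (intro powr_half_sqrt_powr) simp
    then have "t powr (s / 2 - 1) = sqrt (t powr (s - 2))" unfolding e .
    then show ?thesis by (simp only: real_sqrt_mult)
  qed
  finally show ?thesis unfolding D_def .
qed

lemma Tmap_diff_le:
  assumes \<xi>: "\<xi> \<in> Gamma p \<beta> q \<delta>" and \<eta>: "\<eta> \<in> Gamma p \<beta> q \<delta>" and "0 \<le> W"
    and bound: "\<And>t. t \<in> {0..\<delta>} \<Longrightarrow> \<bar>Trhs p \<beta> \<xi> t - Trhs p \<beta> \<eta> t\<bar> \<le> W * t powr (s / 2 - 1)"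
    and \<phi>: "\<phi> \<in> {0..\<delta>}"
  shows "\<bar>Tmap p \<beta> \<xi> \<phi> - Tmap p \<beta> \<eta> \<phi>\<bar> \<le> 2 / s * W"
proof -
  define k where "k = 2 / s * W"
  have k_half: "k * (s / 2) = W" unfolding k_def using exponent_pos by simp
  have "((\<lambda>t. k * (s / 2) * t powr (s / 2 - 1)) has_integral k * \<phi> powr (s / 2)) {0..\<phi>}"
    using exponent_pos \<phi> by (intro has_integral_scaled_powr_from_0) auto
  then have int: "((\<lambda>t. W * t powr (s / 2 - 1)) has_integral k * \<phi> powr (s / 2)) {0..\<phi>}"
    unfolding k_half .
  have "Tmap p \<beta> \<xi> \<phi> - Tmap p \<beta> \<eta> \<phi> = integral {0..\<phi>} (\<lambda>t. Trhs p \<beta> \<xi> t - Trhs p \<beta> \<eta> t)"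
    unfolding Tmap_def using integral_diff[OF Trhs_integrable[OF \<xi> \<phi>] Trhs_integrable[OF \<eta> \<phi>]] by simp
  also have "\<bar>\<dots>\<bar> \<le> integral {0..\<phi>} (\<lambda>t. W * t powr (s / 2 - 1))"
  proof -
    have "norm (integral {0..\<phi>} (\<lambda>t. Trhs p \<beta> \<xi> t - Trhs p \<beta> \<eta> t))
        \<le> integral {0..\<phi>} (\<lambda>t. W * t powr (s / 2 - 1))"
    proof (rule integral_norm_bound_integral)
      show "(\<lambda>t. Trhs p \<beta> \<xi> t - Trhs p \<beta> \<eta> t) integrable_on {0..\<phi>}"
        by (rule integrable_diff[OF Trhs_integrable[OF \<xi> \<phi>] Trhs_integrable[OF \<eta> \<phi>]])
      show "(\<lambda>t. W * t powr (s / 2 - 1)) integrable_on {0..\<phi>}"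
        using int by (rule has_integral_integrable)
      show "norm (Trhs p \<beta> \<xi> t - Trhs p \<beta> \<eta> t) \<le> W * t powr (s / 2 - 1)" if "t \<in> {0..\<phi>}" for t
        using bound[of t] that \<phi> by (simp only: real_norm_def) auto
    qed
    then show ?thesis by (simp only: real_norm_def)
  qed
  also have "\<dots> = k * \<phi> powr (s / 2)" using int by (rule integral_unique)
  also have "\<dots> \<le> k"
  proof -
    have "\<phi> powr (s / 2) \<le> 1" using \<phi> delta_le_1 exponent_pos by (intro powr_le1) auto
    moreover have "0 \<le> k" unfolding k_def using exponent_pos \<open>0 \<le> W\<close> by simp
    ultimately show ?thesis by (simp add: mult_left_le)
  qed
  finally show ?thesis unfolding k_def .
qed

lemma Tmap_continuous_supdist:
  assumes \<xi>: "\<xi> \<in> Gamma p \<beta> q \<delta>" and "0 < e"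
  shows "\<exists>d>0. \<forall>\<eta>\<in>Gamma p \<beta> q \<delta>. supdist \<delta> \<xi> \<eta> < d \<longrightarrow> supdist \<delta> (Tmap p \<beta> \<xi>) (Tmap p \<beta> \<eta>) < e"
proof -
  define K where "K = 2 * M * C"
  have "0 \<le> K" unfolding K_def using M_pos lipschitz_nonneg by simp
  define d where "d = (e * s / 4)^2 / (K + 1)"
  have "0 < d" unfolding d_def using \<open>0 < e\<close> exponent_pos \<open>0 \<le> K\<close> by simp
  have W: "0 \<le> sqrt (2 * M * C * d)" using \<open>0 \<le> K\<close> \<open>0 < d\<close> unfolding K_def by simp
  have "K * d = (e * s / 4)^2 * (K / (K + 1))"
    unfolding d_def using \<open>0 \<le> K\<close> by (simp add: field_simps)
  also have "\<dots> \<le> (e * s / 4)^2" using \<open>0 \<le> K\<close> by (intro mult_left_le) auto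
  finally have "sqrt (K * d) \<le> sqrt ((e * s / 4)^2)" by (rule real_sqrt_le_mono)
  also have "\<dots> = e * s / 4" using \<open>0 < e\<close> exponent_pos by simp
  finally have "sqrt (K * d) \<le> e * s / 4" .
  then have small: "2 / s * sqrt (2 * M * C * d) \<le> e / 2"
    using exponent_pos unfolding K_def by (simp add: field_simps)
  show ?thesis
  proof (intro exI[of _ d] conjI ballI impI \<open>0 < d\<close>)
    fix \<eta> assume \<eta>: "\<eta> \<in> Gamma p \<beta> q \<delta>" and "supdist \<delta> \<xi> \<eta> < d"
    then have close: "\<bar>\<xi> t - \<eta> t\<bar> \<le> d" if "t \<in> {0..\<delta>}" for t
      using abs_le_supdist[OF Gamma_continuous[OF \<xi>] Gamma_continuous[OF \<eta>] that] by linarith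
    have "\<bar>Tmap p \<beta> \<xi> \<phi> - Tmap p \<beta> \<eta> \<phi>\<bar> \<le> e / 2" if "\<phi> \<in> {0..\<delta>}" for \<phi>
      using Tmap_diff_le[OF \<xi> \<eta> W Trhs_diff_le[OF \<xi> \<eta> close] that] small by linarith
    then have "supdist \<delta> (Tmap p \<beta> \<xi>) (Tmap p \<beta> \<eta>) \<le> e / 2"
      using delta_pos by (intro supdist_le) auto
    then show "supdist \<delta> (Tmap p \<beta> \<xi>) (Tmap p \<beta> \<eta>) < e" using \<open>0 < e\<close> by linarith
  qed
qed

lemma Tmap_compact:
  fixes X :: "nat \<Rightarrow> real \<Rightarrow> real"
  assumes "\<And>n. X n \<in> Gamma p \<beta> q \<delta>"
  shows "\<exists>r g. strict_mono r \<and> continuous_on {0..\<delta>} g \<and>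
    uniform_limit {0..\<delta>} (\<lambda>n. Tmap p \<beta> (X (r n))) g sequentially"
proof -
  have "continuous_on {0..\<delta>} (\<lambda>t::real. t powr s)"
    by (rule continuous_on_powr'[OF continuous_on_id continuous_on_const]) (use exponent_pos in auto)
  then have "continuous_on {0..\<delta>} (\<lambda>t. M / s * t powr s)" by (rule continuous_on_mult_left)
  then show ?thesis
  proof (intro uniformly_convergent_subsequence[where F = "\<lambda>n. Tmap p \<beta> (X n)"])
    show "\<bar>Tmap p \<beta> (X n) x\<bar> \<le> \<gamma> + 1" if "x \<in> {0..\<delta>}" for n x
      using Tmap_bounded[OF assms that] .
    show "\<bar>Tmap p \<beta> (X n) x - Tmap p \<beta> (X n) y\<bar> \<le> M / s * x powr s - M / s * y powr s"
      if "0 \<le> y" "y \<le> x" "x \<le> \<delta>" for n x y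
      using Tmap_increment_le[OF assms that] .
  qed
qed

end

lemma gamma_b_cube:
  assumes "\<beta> < 0" "0 < p + 1"
  shows "0 < gamma_b p \<beta>" "- \<beta> * gamma_b p \<beta> ^ 3 * ((p + 1) / 3) = 1"
proof -
  have eq: "gamma_b p \<beta> = (1 / (- \<beta> * ((p + 1) / 3))) powr (1/3)"
    unfolding gamma_b_def using assms by (simp add: abs_of_neg field_simps)
  then show "0 < gamma_b p \<beta>" using assms by (simp add: zero_less_mult_iff)
  have "gamma_b p \<beta> ^ 3 = (1 / (- \<beta> * ((p + 1) / 3))) powr (real 3 * (1/3))"
    unfolding eq by (rule powr_power) (use assms in \<open>auto simp: zero_less_mult_iff\<close>)
  then show "- \<beta> * gamma_b p \<beta> ^ 3 * ((p + 1) / 3) = 1"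
    using assms by (simp add: abs_mult abs_of_neg)
qed

lemma eventually_at_right_0_on_interval:
  fixes P :: "real \<Rightarrow> bool"
  assumes "eventually P (at_right 0)"
  obtains \<delta> where "0 < \<delta>" "\<delta> \<le> 1" "\<And>x. x \<in> {0<..\<delta>} \<Longrightarrow> P x"
proof -
  obtain b where "0 < b" and b: "\<And>x. 0 < x \<Longrightarrow> x < b \<Longrightarrow> P x"
    using assms unfolding eventually_at_right_field by auto
  show ?thesis by (rule that[of "min 1 (b / 2)"]) (use \<open>0 < b\<close> b in auto)
qed

lemma Trhs_pointwise_estimates_near_zero:
  assumes p: "0 < p" "p < 1/2" and "\<beta> < 0" and q: "2 * ((p + 1) / 3) < q" "q < 1"
  shows "\<exists>\<delta>. Trhs_pointwise_estimates p \<beta> q \<delta> (100 * ((p + 1) / 3))"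
proof -
  define s \<gamma> where "s = (p + 1) / 3" and "\<gamma> = gamma_b p \<beta>"
  define A B b where "A = alpha p ^ 2" and "B = alpha p * (alpha p - 1)" and "b = - \<beta>"
  define L where "L = q / s"
  \<comment> \<open>the smallness margin required by normalized_rhs_near_one for L = q/s\<close>
  define t0 where "t0 = min (1/2) ((L - 2) / (2 * L + 7))"
  have s: "1/3 < s" "s < 1/2" "p = 3 * s - 1" using p unfolding s_def by (auto simp: field_simps)
  have "0 < b" using \<open>\<beta> < 0\<close> by (simp add: b_def)
  have "1 \<le> alpha p" using p by (simp add: alpha_def field_simps)
  then have "0 \<le> A" "0 \<le> B" by (simp_all add: A_def B_def)
  have "0 < \<gamma>" and \<gamma>: "b * \<gamma>^3 * s = 1"
    using gamma_b_cube[OF \<open>\<beta> < 0\<close>] p unfolding \<gamma>_def b_def s_def by auto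
  have "2 * s < q" using q(1) unfolding s_def .
  then have "2 < L" using s unfolding L_def by (simp add: field_simps)
  then have t0: "t0 \<le> 1/2" "t0 * (2 * (q / s) + 7) \<le> q / s - 2" "0 < t0"
    unfolding t0_def L_def[symmetric] by (auto simp: min_def field_simps)
  have "\<forall>\<^sub>F x in at_right 0. 1 * x powr (q - s) \<le> t0 * \<gamma> \<and> A * \<gamma>^3 * x powr (1 - q) \<le> t0
      \<and> B / b * x powr (1 - q) \<le> t0"
    using q s t0 \<open>0 < \<gamma>\<close> by (intro eventually_conj eventually_at_right_0_powr_le) auto
  then obtain \<delta> where "0 < \<delta>" "\<delta> \<le> 1" and small0: "\<And>x. x \<in> {0<..\<delta>} \<Longrightarrow>
      x powr (q - s) \<le> t0 * \<gamma> \<and> A * \<gamma>^3 * x powr (1 - q) \<le> t0 \<and> B / b * x powr (1 - q) \<le> t0"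
    by (rule eventually_at_right_0_on_interval) simp
  have small: "x powr (q - s) \<le> t0 * \<gamma>" "A * \<gamma>^3 * x powr (1 - q) \<le> t0" "B / b * x powr (1 - q) \<le> t0"
    if "x \<in> {0<..\<delta>}" for x
    using small0[OF that] by auto
  have Trhs: "Trhs p \<beta> \<xi> x = ode_rhs A B b (x powr p) x (\<xi> x)" for \<xi> x
    by (simp add: Trhs_eq_ode_rhs A_def B_def b_def)
  have dev: "\<bar>\<xi> x - \<gamma> * x powr s\<bar> \<le> x powr q" if "\<xi> \<in> Gamma p \<beta> q \<delta>" "x \<in> {0<..\<delta>}" for \<xi> x
    using that unfolding Gamma_def \<gamma>_def s_def by auto
  have near: "0 < u \<and> \<bar>ode_rhs A B b (x powr p) x u - \<gamma> * s * x powr (s - 1)\<bar> \<le> q * x powr (q - 1)"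
    if "x \<in> {0<..\<delta>}" "\<bar>u - \<gamma> * x powr s\<bar> \<le> x powr q" for x u
    using ode_rhs_near_power[OF \<open>0 < b\<close> \<open>0 \<le> A\<close> \<open>0 \<le> B\<close> \<open>0 < \<gamma>\<close> s(3) _ small[OF that(1)] \<gamma>
        \<open>2 * s < q\<close> t0(1,2) that(2)] that(1) by auto
  have lipschitz: "\<bar>ode_rhs A B b (x powr p) x u - ode_rhs A B b (x powr p) x v\<bar> \<le> 100 * s * \<bar>u - v\<bar> / x"
    if "x \<in> {0<..\<delta>}" "\<bar>u - \<gamma> * x powr s\<bar> \<le> x powr q" "\<bar>v - \<gamma> * x powr s\<bar> \<le> x powr q" for x u v
    using ode_rhs_lipschitz_near_power[OF \<open>0 < b\<close> \<open>0 \<le> A\<close> \<open>0 \<le> B\<close> \<open>0 < \<gamma>\<close> s(3) _ small[OF that(1)] \<gamma>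
        t0(1) that(2,3)] that(1) by auto
  have "Trhs_pointwise_estimates p \<beta> q \<delta> (100 * ((p + 1) / 3))"
  proof (unfold_locales, fold s_def \<gamma>_def)
    show "0 < \<delta>" "\<delta> \<le> 1" by fact+
    show "0 < s" "s \<le> q" "q < 1" "0 \<le> 100 * s" using q s by auto
    show "continuous_on {0<..\<delta>} (Trhs p \<beta> \<xi>)" if "\<xi> \<in> Gamma p \<beta> q \<delta>" for \<xi>
    proof (rule continuous_on_Trhs)
      show "continuous_on {0<..\<delta>} \<xi>"
        using that unfolding Gamma_def by (auto intro: continuous_on_subset)
      show "0 < x \<and> 0 < \<xi> x" if "x \<in> {0<..\<delta>}" for x
        using near[OF _ dev] that \<open>\<xi> \<in> Gamma p \<beta> q \<delta>\<close> by auto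
    qed (use p \<open>\<beta> < 0\<close> in auto)
    show "\<bar>Trhs p \<beta> \<xi> x - \<gamma> * s * x powr (s - 1)\<bar> \<le> q * x powr (q - 1)"
      if "\<xi> \<in> Gamma p \<beta> q \<delta>" "x \<in> {0<..\<delta>}" for \<xi> x
      unfolding Trhs using near[OF that(2) dev[OF that]] by auto
    show "\<bar>Trhs p \<beta> \<xi> x - Trhs p \<beta> \<eta> x\<bar> \<le> 100 * s * \<bar>\<xi> x - \<eta> x\<bar> / x"
      if "\<xi> \<in> Gamma p \<beta> q \<delta>" "\<eta> \<in> Gamma p \<beta> q \<delta>" "x \<in> {0<..\<delta>}" for \<xi> \<eta> x
      unfolding Trhs using lipschitz[OF that(3) dev[OF that(1,3)] dev[OF that(2,3)]] .
  qed
  then show ?thesis ..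
qed

lemma Tmap_continuous_compact_self_map:
  assumes "0 < p" "p < 1/2" "\<beta> < 0" "2 * ((p + 1) / 3) < q" "q < 1"
  shows "\<exists>\<delta>>0.
    (\<forall>\<xi>\<in>Gamma p \<beta> q \<delta>. (\<forall>\<phi>\<in>{0..\<delta>}. Trhs p \<beta> \<xi> integrable_on {0..\<phi>}) \<and>
      (\<forall>\<phi>\<in>{0<..\<delta>}. (Tmap p \<beta> \<xi> has_real_derivative Trhs p \<beta> \<xi> \<phi>) (at \<phi> within {0..\<delta>}))) \<and>
    (\<forall>\<xi>\<in>Gamma p \<beta> q \<delta>. Tmap p \<beta> \<xi> \<in> Gamma p \<beta> q \<delta>) \<and>
    (\<forall>\<xi>\<in>Gamma p \<beta> q \<delta>. \<forall>e>0. \<exists>d>0. \<forall>\<eta>\<in>Gamma p \<beta> q \<delta>.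
      supdist \<delta> \<xi> \<eta> < d \<longrightarrow> supdist \<delta> (Tmap p \<beta> \<xi>) (Tmap p \<beta> \<eta>) < e) \<and>
    (\<forall>X :: nat \<Rightarrow> real \<Rightarrow> real. (\<forall>n. X n \<in> Gamma p \<beta> q \<delta>) \<longrightarrow>
      (\<exists>r g. strict_mono r \<and> continuous_on {0..\<delta>} g \<and>
         uniform_limit {0..\<delta>} (\<lambda>n. Tmap p \<beta> (X (r n))) g sequentially))"
proof -
  obtain \<delta> where "Trhs_pointwise_estimates p \<beta> q \<delta> (100 * ((p + 1) / 3))"
    using Trhs_pointwise_estimates_near_zero assms by blast
  then interpret Trhs_pointwise_estimates p \<beta> q \<delta> "100 * ((p + 1) / 3)" .
  show ?thesis
    using delta_pos Trhs_integrable Tmap_has_derivative Tmap_in_Gamma Tmap_continuous_supdist Tmap_compact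
    by blast
qed

theorem lemma7p1:
  fixes p \<beta> :: real
  assumes "0 < p" "p < 1/2" "\<beta> < 0"
  shows "\<exists>q0. (p + 1) / 3 < q0 \<and> q0 < 1 \<and>
    (\<forall>q. q0 < q \<and> q < 1 \<longrightarrow>
      (\<exists>\<delta>>0.
         \<comment> \<open>T is well defined: zeta' is integrable, zeta(0)=0, zeta' = Trhs on (0,delta]\<close>
         (\<forall>\<xi>\<in>Gamma p \<beta> q \<delta>. (\<forall>\<phi>\<in>{0..\<delta>}. Trhs p \<beta> \<xi> integrable_on {0..\<phi>}) \<and>
             (\<forall>\<phi>\<in>{0<..\<delta>}. (Tmap p \<beta> \<xi> has_real_derivative Trhs p \<beta> \<xi> \<phi>)
                                  (at \<phi> within {0..\<delta>}))) \<and>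
         \<comment> \<open>T maps Gamma into Gamma\<close>
         (\<forall>\<xi>\<in>Gamma p \<beta> q \<delta>. Tmap p \<beta> \<xi> \<in> Gamma p \<beta> q \<delta>) \<and>
         \<comment> \<open>T is continuous w.r.t. the sup norm on [0,delta]\<close>
         (\<forall>\<xi>\<in>Gamma p \<beta> q \<delta>. \<forall>e>0. \<exists>d>0. \<forall>\<eta>\<in>Gamma p \<beta> q \<delta>.
             supdist \<delta> \<xi> \<eta> < d \<longrightarrow>
             supdist \<delta> (Tmap p \<beta> \<xi>) (Tmap p \<beta> \<eta>) < e) \<and>
         \<comment> \<open>T is compact: T(Gamma) is relatively compact in C([0,delta])\<close>
         (\<forall>X :: nat \<Rightarrow> real \<Rightarrow> real. (\<forall>n. X n \<in> Gamma p \<beta> q \<delta>) \<longrightarrow>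
             (\<exists>r g. strict_mono r \<and> continuous_on {0..\<delta>} g \<and>
                uniform_limit {0..\<delta>} (\<lambda>n. Tmap p \<beta> (X (r n))) g sequentially))))"
proof (rule exI[of _ "2 * ((p + 1) / 3)"], intro conjI allI impI)
  show "(p + 1) / 3 < 2 * ((p + 1) / 3)" "2 * ((p + 1) / 3) < 1" using assms by auto
qed (use Tmap_continuous_compact_self_map assms in blast)

end
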